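(* Consider a stochastic mass-action reaction network as described in the context, with reactions partitioned into fast and slow ones and a finite accessible state space. Assume every fast component is strongly connected. Assume also that $\tilde n=A^fn$ takes a constant value $\tilde n^j$ on the $j$-th fast component, with distinct values on distinct components. Let $\pi_j$ be the unique invariant probability distribution of the fast dynamics on the $j$-th fast component. Set $L=\mathrm{diag}(\mathbf 1^T,\dots,\mathbf 1^T)$ and $\Pi=\mathrm{diag}(\pi_1,\dots,\pi_l)$. Then for $i\neq j$, $$(LK^s\Pi)_{ij}=\sum_{\ell\in S_{ij}}c_\ell\,E[h_\ell(n)\mid\tilde n=\tilde n^j]=\sum_{\ell\in S_{ij}}E[\mathcal R^s_\ell(n)\mid\tilde n=\tilde n^j].$$ Here $S_{ij}$ is the set of slow reactions that transform states of the $j$-th fast component into states of the $i$-th fast component. The conditional expectation is $E[f(n)\mid\tilde n=\tilde n^j]=\sum_{q}f(n^{j,q})\,\pi_{jq}$, where $n^{j,q}$ is the $q$-th state of the $j$-th fast component and $\pi_{jq}$ its invariant probability, i.e. $P(n=n^{j,q}\mid\tilde n=\tilde n^j)$.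
   Context: There are $m$ species and $r$ reactions. The state is $n\in\mathbb Z_{\ge0}^m$, the vector of molecule numbers. Reaction $\ell$ changes $n$ by the integer vector $\nu\mathcal E_{(\ell)}$, where $\nu$ is the $m\times p$ complex (stoichiometry) matrix and $\mathcal E_{(\ell)}$ is the $\ell$-th column of the $p\times r$ vertex-edge incidence matrix of the reaction graph. Reaction $\ell$ has stochastic mass-action rate (propensity) $\mathcal R_\ell(n)=c_\ell h_\ell(n)$, where $c_\ell>0$ is a rate constant and $h_\ell(n)=\prod_i\binom{n_i}{\nu_{i j(\ell)}}$, with $j(\ell)$ the reactant complex of reaction $\ell$. The reactions are split into fast and slow. $\mathcal R^s_\ell$ denotes the rate of a slow reaction, and $\mathcal E^f,\mathcal E^s$ denote the columns of $\mathcal E$ for fast and slow reactions. The finite accessible state space is ordered. $K^f$ (resp. $K^s$) is the transition matrix with, for states $p\neq q$, $(K)_{pq}$ equal to the sum of the rates $\mathcal R_\ell(q)$ of the fast (resp. slow) reactions $\ell$ with $p=q+\nu\mathcal E_{(\ell)}$. Its diagonal entries make the column sums zero. The fast components are the connected components of the fast-transition graph on states. Ordering states by component makes $K^f=\mathrm{diag}(K^f_1,\dots,K^f_l)$ block diagonal, and $K^s$ is partitioned conformally into blocks $K^s_{ij}$. $A^f$ is a matrix whose rows form a basis of $\mathcal N[(\nu\mathcal E^f)^T]$, so $\tilde n=A^fn$ is invariant under fast reactions. *)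

theory Defs
  imports Complex_Main
begin

text \<open>Complexes have type 'c, with complex (stoichiometry) matrix nu : 'c => 's => nat.
  Reactions form a finite type 'r; reaction l is the edge src l -> tgt l of the
  reaction graph, so its state change nu E_l is nu (tgt l) - nu (src l).\<close>

definition dvec :: "('c \<Rightarrow> 's \<Rightarrow> nat) \<Rightarrow> ('r \<Rightarrow> 'c) \<Rightarrow> ('r \<Rightarrow> 'c) \<Rightarrow> 'r \<Rightarrow> 's \<Rightarrow> int" where
  "dvec nu src tgt l s = int (nu (tgt l) s) - int (nu (src l) s)"

definition hfun :: "('c \<Rightarrow> 's::finite \<Rightarrow> nat) \<Rightarrow> ('r \<Rightarrow> 'c) \<Rightarrow> 'r \<Rightarrow> ('s \<Rightarrow> nat) \<Rightarrow> real" where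
  "hfun nu src l n = (\<Prod>s\<in>UNIV. real (n s choose nu (src l) s))"

definition propensity :: "('r \<Rightarrow> real) \<Rightarrow> ('c \<Rightarrow> 's::finite \<Rightarrow> nat) \<Rightarrow> ('r \<Rightarrow> 'c) \<Rightarrow> 'r \<Rightarrow> ('s \<Rightarrow> nat) \<Rightarrow> real" where
  "propensity c nu src l n = c l * hfun nu src l n"

definition jumps :: "('c \<Rightarrow> 's \<Rightarrow> nat) \<Rightarrow> ('r \<Rightarrow> 'c) \<Rightarrow> ('r \<Rightarrow> 'c) \<Rightarrow> 'r \<Rightarrow> ('s \<Rightarrow> nat) \<Rightarrow> ('s \<Rightarrow> nat) \<Rightarrow> bool" where
  "jumps nu src tgt l q p \<longleftrightarrow> (\<forall>s. int (p s) = int (q s) + dvec nu src tgt l s)"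

definition reach_step :: "('r \<Rightarrow> real) \<Rightarrow> ('c \<Rightarrow> 's::finite \<Rightarrow> nat) \<Rightarrow> ('r \<Rightarrow> 'c) \<Rightarrow> ('r \<Rightarrow> 'c) \<Rightarrow> (('s \<Rightarrow> nat) \<times> ('s \<Rightarrow> nat)) set" where
  "reach_step c nu src tgt = {(q, p). \<exists>l. propensity c nu src l q > 0 \<and> jumps nu src tgt l q p}"

definition accessible :: "('r \<Rightarrow> real) \<Rightarrow> ('c \<Rightarrow> 's::finite \<Rightarrow> nat) \<Rightarrow> ('r \<Rightarrow> 'c) \<Rightarrow> ('r \<Rightarrow> 'c) \<Rightarrow> ('s \<Rightarrow> nat) \<Rightarrow> ('s \<Rightarrow> nat) set" where
  "accessible c nu src tgt n0 = {p. (n0, p) \<in> (reach_step c nu src tgt)\<^sup>*}"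

definition trans_mat :: "'r set \<Rightarrow> ('r \<Rightarrow> real) \<Rightarrow> ('c \<Rightarrow> 's::finite \<Rightarrow> nat) \<Rightarrow> ('r \<Rightarrow> 'c) \<Rightarrow> ('r \<Rightarrow> 'c)
    \<Rightarrow> ('s \<Rightarrow> nat) set \<Rightarrow> ('s \<Rightarrow> nat) \<Rightarrow> ('s \<Rightarrow> nat) \<Rightarrow> real" where
  "trans_mat Rs c nu src tgt X p q =
     (if p \<noteq> q then (\<Sum>l\<in>{l\<in>Rs. jumps nu src tgt l q p}. propensity c nu src l q)
      else - (\<Sum>p'\<in>X - {q}. \<Sum>l\<in>{l\<in>Rs. jumps nu src tgt l q p'}. propensity c nu src l q))"

definition trans_edges :: "(('s \<Rightarrow> nat) \<Rightarrow> ('s \<Rightarrow> nat) \<Rightarrow> real) \<Rightarrow> ('s \<Rightarrow> nat) set \<Rightarrow> (('s \<Rightarrow> nat) \<times> ('s \<Rightarrow> nat)) set" where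
  "trans_edges K X = {(q, p). q \<in> X \<and> p \<in> X \<and> p \<noteq> q \<and> K p q > 0}"

definition components :: "(('s \<Rightarrow> nat) \<Rightarrow> ('s \<Rightarrow> nat) \<Rightarrow> real) \<Rightarrow> ('s \<Rightarrow> nat) set \<Rightarrow> ('s \<Rightarrow> nat) set set" where
  "components K X = X // (((trans_edges K X \<union> (trans_edges K X)\<inverse>)\<^sup>*) \<inter> (X \<times> X))"

definition nullspace_basis :: "(nat \<Rightarrow> 's::finite \<Rightarrow> real) \<Rightarrow> nat \<Rightarrow> ('c \<Rightarrow> 's \<Rightarrow> nat) \<Rightarrow> ('r \<Rightarrow> 'c) \<Rightarrow> ('r \<Rightarrow> 'c) \<Rightarrow> 'r set \<Rightarrow> bool" where
  "nullspace_basis A r nu src tgt F \<longleftrightarrow>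
     (\<forall>w. (\<forall>s. (\<Sum>k<r. w k * A k s) = 0) \<longrightarrow> (\<forall>k<r. w k = 0)) \<and>
     (\<forall>a::'s \<Rightarrow> real. (\<forall>l\<in>F. (\<Sum>s\<in>UNIV. a s * real_of_int (dvec nu src tgt l s)) = 0)
        \<longleftrightarrow> (\<exists>w. \<forall>s. a s = (\<Sum>k<r. w k * A k s)))"

definition atil :: "(nat \<Rightarrow> 's::finite \<Rightarrow> real) \<Rightarrow> nat \<Rightarrow> ('s \<Rightarrow> nat) \<Rightarrow> nat \<Rightarrow> real" where
  "atil A r n = (\<lambda>k. if k < r then (\<Sum>s\<in>UNIV. A k s * real (n s)) else 0)"

definition invariant_dist :: "(('s \<Rightarrow> nat) \<Rightarrow> ('s \<Rightarrow> nat) \<Rightarrow> real) \<Rightarrow> ('s \<Rightarrow> nat) set \<Rightarrow> (('s \<Rightarrow> nat) \<Rightarrow> real) \<Rightarrow> bool" where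
  "invariant_dist K C pd \<longleftrightarrow> (\<forall>q\<in>C. pd q \<ge> 0) \<and> (\<Sum>q\<in>C. pd q) = 1 \<and>
      (\<forall>p\<in>C. (\<Sum>q\<in>C. K p q * pd q) = 0)"

definition cond_exp :: "(('s \<Rightarrow> nat) \<Rightarrow> real) \<Rightarrow> ('s \<Rightarrow> nat) set \<Rightarrow> (('s \<Rightarrow> nat) \<Rightarrow> real) \<Rightarrow> real" where
  "cond_exp pd C f = (\<Sum>q\<in>C. f q * pd q)"

text \<open>(L K Pi)_{ij} = 1^T K_{ij} pi_j, written out.\<close>
definition LKPi :: "(('s \<Rightarrow> nat) \<Rightarrow> ('s \<Rightarrow> nat) \<Rightarrow> real) \<Rightarrow> (('s \<Rightarrow> nat) set \<Rightarrow> ('s \<Rightarrow> nat) \<Rightarrow> real)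
    \<Rightarrow> ('s \<Rightarrow> nat) set \<Rightarrow> ('s \<Rightarrow> nat) set \<Rightarrow> real" where
  "LKPi K pd Ci Cj = (\<Sum>p\<in>Ci. \<Sum>q\<in>Cj. K p q * pd Cj q)"

definition S_set :: "'r set \<Rightarrow> ('r \<Rightarrow> real) \<Rightarrow> ('c \<Rightarrow> 's::finite \<Rightarrow> nat) \<Rightarrow> ('r \<Rightarrow> 'c) \<Rightarrow> ('r \<Rightarrow> 'c)
    \<Rightarrow> ('s \<Rightarrow> nat) set \<Rightarrow> ('s \<Rightarrow> nat) set \<Rightarrow> 'r set" where
  "S_set Slow c nu src tgt Ci Cj =
     {l\<in>Slow. \<exists>q\<in>Cj. \<exists>p\<in>Ci. propensity c nu src l q > 0 \<and> jumps nu src tgt l q p}"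

end

theory Submission imports Defs begin

text \<open>Fix a state q of the j-th fast component. A slow reaction firing at q lands in a
  unique state, and the i-th row block of K^s sums these jumps over the states of the
  i-th component, so column q of L K^s sums the propensities of the slow reactions whose
  target from q lies in that component. Such a target lies there exactly when the reaction
  belongs to S_ij: a reaction shifts tilde n by a fixed amount, tilde n is constant on the
  j-th component, and distinct components carry distinct values of tilde n. Averaging over
  q with the weights pi_j gives the conditional expectations.\<close>

lemma components_subset: "C \<in> components K X \<Longrightarrow> C \<subseteq> X"
  unfolding components_def quotient_def by auto

lemma in_components: "p \<in> X \<Longrightarrow> \<exists>C\<in>components K X. p \<in> C"
  unfolding components_def by (rule bexI[OF _ quotientI]) auto

lemma jumps_unique: "jumps nu src tgt l q p \<Longrightarrow> jumps nu src tgt l q p' \<Longrightarrow> p = p'"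
  unfolding jumps_def by (rule ext) (metis of_nat_eq_iff add_right_cancel)

lemma jumps_exists:
  assumes "hfun nu src l q \<noteq> 0"
  shows "\<exists>p. jumps nu src tgt l q p"
proof -
  have "nu (src l) s \<le> q s" for s
  proof -
    have "real (q s choose nu (src l) s) \<noteq> 0"
      using assms unfolding hfun_def by (metis UNIV_I prod_zero_iff finite)
    then show ?thesis using binomial_eq_0_iff by fastforce
  qed
  then have "jumps nu src tgt l q (\<lambda>s. q s + nu (tgt l) s - nu (src l) s)"
    unfolding jumps_def dvec_def by (simp add: of_nat_diff trans_le_add1)
  then show ?thesis by blast
qed

lemma accessible_jumps:
  "q \<in> accessible c nu src tgt n0 \<Longrightarrow> propensity c nu src l q > 0 \<Longrightarrow> jumps nu src tgt l q p
    \<Longrightarrow> p \<in> accessible c nu src tgt n0"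
  unfolding accessible_def reach_step_def by (auto intro: rtrancl_into_rtrancl)

lemma propensity_nonneg: "c l \<ge> 0 \<Longrightarrow> propensity c nu src l q \<ge> 0"
  unfolding propensity_def hfun_def by (simp add: prod_nonneg)

lemma atil_jumps:
  assumes "jumps nu src tgt l q p"
  shows "atil A r p k = atil A r q k
           + (if k < r then \<Sum>s\<in>UNIV. A k s * real_of_int (dvec nu src tgt l s) else 0)"
proof -
  have "real (p s) = real (q s) + real_of_int (dvec nu src tgt l s)" for s
    using assms unfolding jumps_def by (metis of_int_add of_int_of_nat_eq)
  then show ?thesis unfolding atil_def by (simp add: algebra_simps sum.distrib)
qed

lemma atil_jumps_eq:
  "jumps nu src tgt l q p \<Longrightarrow> jumps nu src tgt l q' p' \<Longrightarrow> atil A r q = atil A r q'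
    \<Longrightarrow> atil A r p = atil A r p'"
  by (rule ext) (simp add: atil_jumps)

lemma trans_mat_column_sum:
  fixes src tgt :: "'r::finite \<Rightarrow> 'c"
  assumes "finite P" "q \<notin> P"
  shows "(\<Sum>p\<in>P. trans_mat Rs c nu src tgt X p q)
           = (\<Sum>l\<in>{l\<in>Rs. \<exists>p\<in>P. jumps nu src tgt l q p}. propensity c nu src l q)"
proof -
  let ?R = "propensity c nu src"
  have "(\<Sum>p\<in>P. trans_mat Rs c nu src tgt X p q)
          = (\<Sum>p\<in>P. \<Sum>l\<in>UNIV. if l \<in> Rs \<and> jumps nu src tgt l q p then ?R l q else 0)"
  proof (rule sum.cong[OF refl])
    fix p assume "p \<in> P"
    with assms(2) have "p \<noteq> q" by blast
    then show "trans_mat Rs c nu src tgt X p q = (\<Sum>l\<in>UNIV. if l \<in> Rs \<and> jumps nu src tgt l q p then ?R l q else 0)"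
      unfolding trans_mat_def by (simp add: sum.If_cases)
  qed
  also have "\<dots> = (\<Sum>l\<in>UNIV. \<Sum>p\<in>P. if l \<in> Rs \<and> jumps nu src tgt l q p then ?R l q else 0)"
    by (rule sum.swap)
  also have "\<dots> = (\<Sum>l\<in>UNIV. if l \<in> Rs \<and> (\<exists>p\<in>P. jumps nu src tgt l q p) then ?R l q else 0)"
  proof (rule sum.cong[OF refl])
    fix l
    show "(\<Sum>p\<in>P. if l \<in> Rs \<and> jumps nu src tgt l q p then ?R l q else 0)
            = (if l \<in> Rs \<and> (\<exists>p\<in>P. jumps nu src tgt l q p) then ?R l q else 0)"
    proof (cases "l \<in> Rs \<and> (\<exists>p\<in>P. jumps nu src tgt l q p)")
      case True
      then obtain p0 where "p0 \<in> P" "jumps nu src tgt l q p0" by blast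
      then have "jumps nu src tgt l q p \<longleftrightarrow> p = p0" for p using jumps_unique by metis
      with True \<open>p0 \<in> P\<close> assms(1) show ?thesis by (simp add: sum.delta)
    qed auto
  qed
  also have "\<dots> = (\<Sum>l\<in>{l\<in>Rs. \<exists>p\<in>P. jumps nu src tgt l q p}. ?R l q)"
    by (simp add: sum.If_cases)
  finally show ?thesis .
qed

lemma jumps_into_iff_S_set:
  assumes cover: "\<forall>p\<in>accessible c nu src tgt n0. \<exists>D\<in>\<C>. p \<in> D"
    and const: "\<forall>p\<in>Cj. \<forall>p'\<in>Cj. atil A r p = atil A r p'"
    and distinct: "\<forall>D\<in>\<C>. D \<noteq> Ci \<longrightarrow> (\<forall>p\<in>D. \<forall>p'\<in>Ci. atil A r p \<noteq> atil A r p')"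
    and Cj: "Cj \<subseteq> accessible c nu src tgt n0" and q: "q \<in> Cj"
    and l: "l \<in> Rs" and pos: "propensity c nu src l q > 0"
  shows "(\<exists>p\<in>Ci. jumps nu src tgt l q p) \<longleftrightarrow> l \<in> S_set Rs c nu src tgt Ci Cj"
proof
  assume "\<exists>p\<in>Ci. jumps nu src tgt l q p"
  with l q pos show "l \<in> S_set Rs c nu src tgt Ci Cj" unfolding S_set_def by blast
next
  assume "l \<in> S_set Rs c nu src tgt Ci Cj"
  then obtain q' p' where "q' \<in> Cj" "p' \<in> Ci" "jumps nu src tgt l q' p'"
    unfolding S_set_def by blast
  from pos have "hfun nu src l q \<noteq> 0" unfolding propensity_def by auto
  then obtain p0 where p0: "jumps nu src tgt l q p0" using jumps_exists[where tgt = tgt] by blast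
  have "p0 \<in> accessible c nu src tgt n0" using accessible_jumps[OF _ pos p0] q Cj by auto
  with cover obtain D where "D \<in> \<C>" "p0 \<in> D" by blast
  have "atil A r p0 = atil A r p'"
    using atil_jumps_eq[OF p0 \<open>jumps nu src tgt l q' p'\<close>] const q \<open>q' \<in> Cj\<close> by blast
  with distinct \<open>D \<in> \<C>\<close> \<open>p0 \<in> D\<close> \<open>p' \<in> Ci\<close> have "D = Ci" by blast
  with p0 \<open>p0 \<in> D\<close> show "\<exists>p\<in>Ci. jumps nu src tgt l q p" by blast
qed

lemma trans_mat_column_sum_S_set:
  fixes src tgt :: "'r::finite \<Rightarrow> 'c"
  assumes c_nonneg: "\<forall>l. c l \<ge> 0"
    and cover: "\<forall>p\<in>accessible c nu src tgt n0. \<exists>D\<in>\<C>. p \<in> D"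
    and const: "\<forall>p\<in>Cj. \<forall>p'\<in>Cj. atil A r p = atil A r p'"
    and distinct: "\<forall>D\<in>\<C>. D \<noteq> Ci \<longrightarrow> (\<forall>p\<in>D. \<forall>p'\<in>Ci. atil A r p \<noteq> atil A r p')"
    and Cj: "Cj \<subseteq> accessible c nu src tgt n0" and q: "q \<in> Cj"
    and "finite Ci" "q \<notin> Ci"
  shows "(\<Sum>p\<in>Ci. trans_mat Rs c nu src tgt X p q)
           = (\<Sum>l\<in>S_set Rs c nu src tgt Ci Cj. propensity c nu src l q)"
proof -
  let ?S = "S_set Rs c nu src tgt Ci Cj" and ?R = "propensity c nu src"
  let ?jumps_into_Ci = "\<lambda>l. l \<in> Rs \<and> (\<exists>p\<in>Ci. jumps nu src tgt l q p)"
  have same_terms: "(if ?jumps_into_Ci l then ?R l q else 0) = (if l \<in> ?S then ?R l q else 0)" for l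
  proof (cases "?R l q > 0")
    case True
    with jumps_into_iff_S_set[OF cover const distinct Cj q _ True] show ?thesis
      unfolding S_set_def by auto
  next
    case False
    moreover have "?R l q \<ge> 0" using propensity_nonneg c_nonneg by metis
    ultimately show ?thesis by simp
  qed
  have "(\<Sum>p\<in>Ci. trans_mat Rs c nu src tgt X p q) = (\<Sum>l\<in>{l. ?jumps_into_Ci l}. ?R l q)"
    by (rule trans_mat_column_sum[OF \<open>finite Ci\<close> \<open>q \<notin> Ci\<close>])
  also have "\<dots> = (\<Sum>l\<in>UNIV. if ?jumps_into_Ci l then ?R l q else 0)"
    by (simp add: sum.If_cases)
  also have "\<dots> = (\<Sum>l\<in>?S. ?R l q)"
    unfolding same_terms by (simp add: sum.If_cases)
  finally show ?thesis .
qed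

lemma cond_exp_propensity:
  "cond_exp pd C (propensity c nu src l) = c l * cond_exp pd C (hfun nu src l)"
  unfolding cond_exp_def propensity_def by (simp add: sum_distrib_left mult.assoc)

lemma LKPi_eq_sum_cond_exp:
  assumes "finite S"
    and "\<And>q. q \<in> Cj \<Longrightarrow> (\<Sum>p\<in>Ci. K p q) = (\<Sum>l\<in>S. f l q)"
  shows "LKPi K pd Ci Cj = (\<Sum>l\<in>S. cond_exp (pd Cj) Cj (f l))"
proof -
  have "LKPi K pd Ci Cj = (\<Sum>q\<in>Cj. (\<Sum>p\<in>Ci. K p q) * pd Cj q)"
    unfolding LKPi_def by (subst sum.swap) (simp add: sum_distrib_right)
  also have "\<dots> = (\<Sum>q\<in>Cj. (\<Sum>l\<in>S. f l q) * pd Cj q)"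
    using assms(2) by simp
  also have "\<dots> = (\<Sum>l\<in>S. cond_exp (pd Cj) Cj (f l))"
    unfolding cond_exp_def by (simp add: sum_distrib_right sum.swap[of _ Cj])
  finally show ?thesis .
qed

theorem theorem3:
  fixes nu :: "'c \<Rightarrow> 's::finite \<Rightarrow> nat"
    and src tgt :: "'r::finite \<Rightarrow> 'c"
    and c :: "'r \<Rightarrow> real"
    and F :: "'r set"
    and n0 :: "'s \<Rightarrow> nat"
    and A :: "nat \<Rightarrow> 's \<Rightarrow> real" and r :: nat
    and pd :: "('s \<Rightarrow> nat) set \<Rightarrow> ('s \<Rightarrow> nat) \<Rightarrow> real"
    and Ci Cj :: "('s \<Rightarrow> nat) set"
  defines "X \<equiv> accessible c nu src tgt n0"
    and "Kf \<equiv> trans_mat F c nu src tgt (accessible c nu src tgt n0)"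
    and "Ks \<equiv> trans_mat (- F) c nu src tgt (accessible c nu src tgt n0)"
  assumes c_pos: "\<forall>l. c l > 0"
    and X_fin: "finite X"
    and strong: "\<forall>C\<in>components Kf X. \<forall>p\<in>C. \<forall>q\<in>C. (q, p) \<in> (trans_edges Kf X)\<^sup>*"
    and basis: "nullspace_basis A r nu src tgt F"
    and const: "\<forall>C\<in>components Kf X. \<forall>p\<in>C. \<forall>q\<in>C. atil A r p = atil A r q"
    and distinct: "\<forall>C\<in>components Kf X. \<forall>D\<in>components Kf X. C \<noteq> D \<longrightarrow>
                     (\<forall>p\<in>C. \<forall>q\<in>D. atil A r p \<noteq> atil A r q)"
    and inv: "\<forall>C\<in>components Kf X. invariant_dist Kf C (pd C)"
    and Ci: "Ci \<in> components Kf X" and Cj: "Cj \<in> components Kf X" and ij: "Ci \<noteq> Cj"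
  shows "LKPi Ks pd Ci Cj =
           (\<Sum>l\<in>S_set (- F) c nu src tgt Ci Cj. c l * cond_exp (pd Cj) Cj (hfun nu src l))
       \<and> (\<Sum>l\<in>S_set (- F) c nu src tgt Ci Cj. c l * cond_exp (pd Cj) Cj (hfun nu src l)) =
           (\<Sum>l\<in>S_set (- F) c nu src tgt Ci Cj. cond_exp (pd Cj) Cj (propensity c nu src l))"
proof -
  have CjX: "Cj \<subseteq> X" and "finite Ci"
    using Ci Cj components_subset X_fin finite_subset by metis+
  have cover: "\<forall>p\<in>accessible c nu src tgt n0. \<exists>D\<in>components Kf X. p \<in> D"
    unfolding X_def using in_components by blast
  have const_Cj: "\<forall>p\<in>Cj. \<forall>p'\<in>Cj. atil A r p = atil A r p'"
    using const Cj by blast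
  have distinct_Ci: "\<forall>D\<in>components Kf X. D \<noteq> Ci \<longrightarrow> (\<forall>p\<in>D. \<forall>p'\<in>Ci. atil A r p \<noteq> atil A r p')"
    using distinct Ci by blast
  have "(\<Sum>p\<in>Ci. Ks p q) = (\<Sum>l\<in>S_set (- F) c nu src tgt Ci Cj. propensity c nu src l q)"
    if "q \<in> Cj" for q
  proof -
    have "q \<notin> Ci" using distinct Ci Cj ij that by blast
    with c_pos show ?thesis
      unfolding Ks_def
      by (intro trans_mat_column_sum_S_set[OF _ cover const_Cj distinct_Ci CjX[unfolded X_def] that
            \<open>finite Ci\<close>]) (auto simp: less_imp_le)
  qed
  then have "LKPi Ks pd Ci Cj
              = (\<Sum>l\<in>S_set (- F) c nu src tgt Ci Cj. cond_exp (pd Cj) Cj (propensity c nu src l))"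
    by (rule LKPi_eq_sum_cond_exp[OF finite])
  then show ?thesis by (simp add: cond_exp_propensity)
qed

end
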